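(* Let $N \ge 1$ and $p \ge 1$. Then there exist $\delta_0>0$ and a closed half-space $H\subset \mathbb{R}^N$ with $0\in H$ such that for every $0<\delta<\delta_0$ there exists a measurable function $u:\mathbb{R}^N\to\mathbb{R}$ with $I_\delta(u^H)>I_\delta(u)$.
   Context: For $\delta>0$, $p\ge 1$ and measurable $u:\mathbb{R}^N\to\mathbb{R}$, define $$I_\delta(u):=\iint_{\{(x,y)\in\mathbb{R}^N\times\mathbb{R}^N:\ |u(y)-u(x)|>\delta\}}\frac{\delta^p}{|x-y|^{N+p}}\,dx\,dy \in[0,+\infty].$$ For a closed half-space $H\subset\mathbb{R}^N$, let $\sigma_H:\mathbb{R}^N\to\mathbb{R}^N$ denote the reflection across the hyperplane $\partial H$ (an isometry with $\sigma_H^2=\mathrm{Id}$ and $|x-y|<|x-\sigma_H(y)|$ for $x,y$ in the interior of $H$). The polarization (two-point rearrangement) of $u$ with respect to $H$ is $$u^H(x):=\begin{cases}\max\{u(x),u(\sigma_H(x))\}, & x\in H,\\ \min\{u(x),u(\sigma_H(x))\}, & x\in \mathbb{R}^N\setminus H.\end{cases}$$ *)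

theory Defs
  imports "HOL-Analysis.Analysis"
begin

definition halfspace :: "'a::euclidean_space \<Rightarrow> real \<Rightarrow> 'a set" where
  "halfspace a b = {x. inner a x \<le> b}"

definition refl_hp :: "'a::euclidean_space \<Rightarrow> real \<Rightarrow> 'a \<Rightarrow> 'a" where
  "refl_hp a b x = x - (2 * (inner a x - b) / (norm a)^2) *\<^sub>R a"

definition polarization :: "'a::euclidean_space \<Rightarrow> real \<Rightarrow> ('a \<Rightarrow> real) \<Rightarrow> 'a \<Rightarrow> real" where
  "polarization a b u x =
     (if x \<in> halfspace a b then max (u x) (u (refl_hp a b x))
      else min (u x) (u (refl_hp a b x)))"

definition I_delta :: "real \<Rightarrow> real \<Rightarrow> ('a::euclidean_space \<Rightarrow> real) \<Rightarrow> ennreal" where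
  "I_delta p \<delta> u =
     (\<integral>\<^sup>+ z. indicator {(x, y). \<bar>u y - u x\<bar> > \<delta>} z *
              ennreal (\<delta> powr p / (dist (fst z) (snd z)) powr (real DIM('a) + p))
        \<partial>(lebesgue \<Otimes>\<^sub>M lebesgue))"

end

theory Submission
  imports Defs
begin

text \<open>
  Place four balls of radius 1/4 on a line through the origin, centred at -3, -1 (inside
  H = {x. e \<bullet> x \<le> 0}) and at 1, 3 (outside), and let u/\<delta> be 3/2, 3/5, 0, 17/10 on them and
  1 elsewhere. Polarization only swaps the values on the balls at -3 and 3. Both functions jump
  by more than \<delta> between the balls at -3, 3 and the ball at 1; in addition, u jumps between
  the balls at 3 and -1 (distance about 4), whereas its polarization jumps between the balls at
  -3 and -1 (distance about 2). The common part of the jump sets has finite energy and the kernel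
  decreases with distance, so polarization strictly increases the energy.
\<close>

definition kernel_energy :: "real \<Rightarrow> real \<Rightarrow> ('a::euclidean_space \<times> 'a) set \<Rightarrow> ennreal" where
  "kernel_energy p \<delta> E =
     (\<integral>\<^sup>+ z. indicator E z * ennreal (\<delta> powr p / (dist (fst z) (snd z)) powr (real DIM('a) + p))
        \<partial>(lebesgue \<Otimes>\<^sub>M lebesgue))"

definition jump_set :: "real \<Rightarrow> ('a \<Rightarrow> real) \<Rightarrow> ('a \<times> 'a) set" where
  "jump_set \<delta> u = {(x, y). \<delta> < \<bar>u y - u x\<bar>}"

definition sym_rect :: "'a set \<Rightarrow> 'a set \<Rightarrow> ('a \<times> 'a) set" where
  "sym_rect S T = S \<times> T \<union> T \<times> S"

lemma I_delta_eq_kernel_energy: "I_delta p \<delta> u = kernel_energy p \<delta> (jump_set \<delta> u)"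
  by (simp add: I_delta_def kernel_energy_def jump_set_def)

lemma jump_set_scale:
  assumes "0 < c"
  shows "jump_set (c * \<delta>) (\<lambda>x. c * u x) = jump_set \<delta> u"
proof -
  have "\<bar>c * u y - c * u x\<bar> = c * \<bar>u y - u x\<bar>" for x y
    using assms by (simp add: abs_mult flip: right_diff_distrib)
  then show ?thesis
    using assms by (simp add: jump_set_def)
qed

lemma I_delta_scaled:
  assumes "0 < \<delta>"
  shows "I_delta p \<delta> (\<lambda>x. \<delta> * u x) = kernel_energy p \<delta> (jump_set 1 u)"
  using jump_set_scale[OF assms, of 1 u] by (simp add: I_delta_eq_kernel_energy)

lemma sigma_finite_lebesgue: "sigma_finite_measure (lebesgue :: 'a::euclidean_space measure)"
proof -
  obtain A :: "'a set set" where "countable A" "A \<subseteq> sets lborel" "\<Union>A = space lborel"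
      "\<forall>a\<in>A. emeasure lborel a \<noteq> \<infinity>"
    using sigma_finite_lborel unfolding sigma_finite_measure_def by blast
  then show ?thesis
    unfolding sigma_finite_measure_def by (intro exI[of _ A]) auto
qed

lemma sets_sym_rect [measurable]:
  assumes "S \<in> sets lebesgue" "T \<in> sets lebesgue"
  shows "sym_rect S T \<in> sets (lebesgue \<Otimes>\<^sub>M lebesgue)"
  using assms by (simp add: sym_rect_def pair_measureI)

lemma emeasure_sym_rect:
  fixes S T :: "'a::euclidean_space set"
  assumes "S \<in> sets lebesgue" "T \<in> sets lebesgue" "S \<inter> T = {}"
  shows "emeasure (lebesgue \<Otimes>\<^sub>M lebesgue) (sym_rect S T) = 2 * (emeasure lebesgue S * emeasure lebesgue T)"
proof -
  have "emeasure (lebesgue \<Otimes>\<^sub>M lebesgue) (sym_rect S T)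
      = emeasure (lebesgue \<Otimes>\<^sub>M lebesgue) (S \<times> T) + emeasure (lebesgue \<Otimes>\<^sub>M lebesgue) (T \<times> S)"
    unfolding sym_rect_def using assms by (intro plus_emeasure[symmetric]) (auto intro: pair_measureI)
  then show ?thesis
    using assms by (simp add: sigma_finite_measure.emeasure_pair_measure_Times[OF sigma_finite_lebesgue]
        mult.commute mult_2)
qed

lemma kernel_measurable:
  "(\<lambda>z. ennreal (c / dist (fst z) (snd z) powr q))
     \<in> borel_measurable ((lebesgue::'a::euclidean_space measure) \<Otimes>\<^sub>M lebesgue)"
proof -
  have "fst \<in> ((lebesgue::'a measure) \<Otimes>\<^sub>M lebesgue) \<rightarrow>\<^sub>M borel"
    by (rule measurable_compose[OF measurable_fst]) (rule measurable_completion, simp)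
  moreover have "snd \<in> ((lebesgue::'a measure) \<Otimes>\<^sub>M lebesgue) \<rightarrow>\<^sub>M borel"
    by (rule measurable_compose[OF measurable_snd]) (rule measurable_completion, simp)
  ultimately show ?thesis by measurable
qed

lemma kernel_energy_Un:
  fixes E F :: "('a::euclidean_space \<times> 'a) set"
  assumes "E \<in> sets (lebesgue \<Otimes>\<^sub>M lebesgue)" "F \<in> sets (lebesgue \<Otimes>\<^sub>M lebesgue)" "E \<inter> F = {}"
  shows "kernel_energy p \<delta> (E \<union> F) = kernel_energy p \<delta> E + kernel_energy p \<delta> F"
proof -
  have indicator_Un: "indicator (E \<union> F) z = indicator E z + (indicator F z :: ennreal)" for z
    using assms(3) by (auto simp: indicator_def)
  show ?thesis
    unfolding kernel_energy_def indicator_Un distrib_right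
    using assms(1,2)
    by (intro nn_integral_add borel_measurable_times_ennreal borel_measurable_indicator kernel_measurable)
qed

lemma kernel_energy_le:
  fixes E :: "('a::euclidean_space \<times> 'a) set"
  assumes "E \<in> sets (lebesgue \<Otimes>\<^sub>M lebesgue)" "0 < m" "0 \<le> p"
    and "\<And>x y. (x, y) \<in> E \<Longrightarrow> m \<le> dist x y"
  shows "kernel_energy p \<delta> E
     \<le> ennreal (\<delta> powr p / m powr (real DIM('a) + p)) * emeasure (lebesgue \<Otimes>\<^sub>M lebesgue) E"
proof -
  let ?q = "real DIM('a) + p"
  have "kernel_energy p \<delta> E
      \<le> (\<integral>\<^sup>+ z. ennreal (\<delta> powr p / m powr ?q) * indicator E z \<partial>(lebesgue \<Otimes>\<^sub>M lebesgue))"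
    unfolding kernel_energy_def
  proof (intro nn_integral_mono)
    fix z :: "'a \<times> 'a"
    show "indicator E z * ennreal (\<delta> powr p / dist (fst z) (snd z) powr ?q)
        \<le> ennreal (\<delta> powr p / m powr ?q) * indicator E z"
    proof (cases "z \<in> E")
      case True
      then have d: "m \<le> dist (fst z) (snd z)"
        using assms(4)[of "fst z" "snd z"] by simp
      then have "m powr ?q \<le> dist (fst z) (snd z) powr ?q"
        using assms(2,3) by (intro powr_mono2) auto
      then have "\<delta> powr p / dist (fst z) (snd z) powr ?q \<le> \<delta> powr p / m powr ?q"
        using assms(2) d by (intro divide_left_mono mult_pos_pos) auto
      then show ?thesis
        using True by (simp add: ennreal_leI)
    qed simp
  qed
  also have "\<dots> = ennreal (\<delta> powr p / m powr ?q) * emeasure (lebesgue \<Otimes>\<^sub>M lebesgue) E"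
    using assms(1) by (rule nn_integral_cmult_indicator)
  finally show ?thesis .
qed

lemma kernel_energy_ge:
  fixes E :: "('a::euclidean_space \<times> 'a) set"
  assumes "E \<in> sets (lebesgue \<Otimes>\<^sub>M lebesgue)" "0 \<le> p"
    and "\<And>x y. (x, y) \<in> E \<Longrightarrow> 0 < dist x y \<and> dist x y \<le> M"
  shows "ennreal (\<delta> powr p / M powr (real DIM('a) + p)) * emeasure (lebesgue \<Otimes>\<^sub>M lebesgue) E
     \<le> kernel_energy p \<delta> E"
proof -
  let ?q = "real DIM('a) + p"
  have "ennreal (\<delta> powr p / M powr ?q) * emeasure (lebesgue \<Otimes>\<^sub>M lebesgue) E
      = (\<integral>\<^sup>+ z. ennreal (\<delta> powr p / M powr ?q) * indicator E z \<partial>(lebesgue \<Otimes>\<^sub>M lebesgue))"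
    using assms(1) by (rule nn_integral_cmult_indicator[symmetric])
  also have "\<dots> \<le> kernel_energy p \<delta> E"
    unfolding kernel_energy_def
  proof (intro nn_integral_mono)
    fix z :: "'a \<times> 'a"
    show "ennreal (\<delta> powr p / M powr ?q) * indicator E z
        \<le> indicator E z * ennreal (\<delta> powr p / dist (fst z) (snd z) powr ?q)"
    proof (cases "z \<in> E")
      case True
      then have d: "0 < dist (fst z) (snd z)" "dist (fst z) (snd z) \<le> M"
        using assms(3)[of "fst z" "snd z"] by auto
      then have "dist (fst z) (snd z) powr ?q \<le> M powr ?q"
        using assms(2) by (intro powr_mono2) auto
      then have "\<delta> powr p / M powr ?q \<le> \<delta> powr p / dist (fst z) (snd z) powr ?q"
        using d by (intro divide_left_mono mult_pos_pos) auto
      then show ?thesis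
        using True by (simp add: ennreal_leI)
    qed simp
  qed
  finally show ?thesis .
qed

lemma kernel_energy_less:
  fixes E F :: "('a::euclidean_space \<times> 'a) set"
  assumes "E \<in> sets (lebesgue \<Otimes>\<^sub>M lebesgue)" "F \<in> sets (lebesgue \<Otimes>\<^sub>M lebesgue)"
    and "emeasure (lebesgue \<Otimes>\<^sub>M lebesgue) E = emeasure (lebesgue \<Otimes>\<^sub>M lebesgue) F"
    and "0 < emeasure (lebesgue \<Otimes>\<^sub>M lebesgue) F" "emeasure (lebesgue \<Otimes>\<^sub>M lebesgue) F < \<infinity>"
    and "0 \<le> p" "0 < \<delta>" "0 < M" "M < m"
    and "\<And>x y. (x, y) \<in> E \<Longrightarrow> m \<le> dist x y"
    and "\<And>x y. (x, y) \<in> F \<Longrightarrow> 0 < dist x y \<and> dist x y \<le> M"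
  shows "kernel_energy p \<delta> E < kernel_energy p \<delta> F"
proof -
  let ?q = "real DIM('a) + p" and ?\<mu> = "emeasure (lebesgue \<Otimes>\<^sub>M lebesgue) F"
  have "kernel_energy p \<delta> E \<le> ennreal (\<delta> powr p / m powr ?q) * ?\<mu>"
    using kernel_energy_le[OF assms(1) _ assms(6,10)] assms(3,8,9) by simp
  also have "\<dots> < ennreal (\<delta> powr p / M powr ?q) * ?\<mu>"
  proof (intro ennreal_mult_strict_right_mono ennreal_lessI divide_strict_left_mono)
    show "M powr ?q < m powr ?q"
      using assms(6,8,9) by (intro powr_less_mono2 add_pos_nonneg) auto
  qed (use assms(4,5,7,8,9) in auto)
  also have "\<dots> \<le> kernel_energy p \<delta> F"
    using kernel_energy_ge[OF assms(2,6,11)] .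
  finally show ?thesis .
qed

lemma dist_in_balls:
  assumes "x \<in> ball a r" "y \<in> ball b s"
  shows "dist a b - (r + s) < dist x y" "dist x y < dist a b + (r + s)"
  using assms dist_triangle[of a b x] dist_triangle[of x b y] dist_triangle[of x y a]
    dist_triangle[of a y b] by (simp_all add: dist_commute)

lemma refl_hp_involution:
  assumes "a \<noteq> 0"
  shows "refl_hp a b (refl_hp a b x) = x"
proof -
  define t where "t y = 2 * (inner a y - b) / (norm a)\<^sup>2" for y
  have refl: "refl_hp a b y = y - t y *\<^sub>R a" for y
    by (simp add: refl_hp_def t_def)
  have "inner a (refl_hp a b x) = 2 * b - inner a x"
    using assms by (simp add: refl t_def inner_diff_right power2_norm_eq_inner)
  then have "t (refl_hp a b x) = - t x"
    by (simp add: t_def minus_divide_left algebra_simps)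
  then show ?thesis
    by (simp add: refl)
qed

lemma dist_refl_hp:
  assumes "a \<noteq> 0"
  shows "dist (refl_hp a b x) (refl_hp a b y) = dist x y"
proof -
  define w where "w = x - y"
  define s where "s = 2 * inner a w / (norm a)\<^sup>2"
  have "refl_hp a b x - refl_hp a b y = w - s *\<^sub>R a"
    by (simp add: refl_hp_def w_def s_def algebra_simps inner_diff_right diff_divide_distrib)
  moreover have "(norm (w - s *\<^sub>R a))\<^sup>2 = inner w w - s * (2 * inner a w - s * inner a a)"
    unfolding power2_norm_eq_inner by (simp add: inner_diff_left inner_diff_right inner_commute algebra_simps)
  moreover have "s * inner a a = 2 * inner a w"
    using assms by (simp add: s_def power2_norm_eq_inner)
  ultimately show ?thesis
    by (simp add: dist_norm power2_eq_iff_nonneg flip: w_def power2_norm_eq_inner)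
qed

lemma refl_hp_in_ball_iff:
  assumes "a \<noteq> 0"
  shows "refl_hp a b x \<in> ball c r \<longleftrightarrow> x \<in> ball (refl_hp a b c) r"
  using dist_refl_hp[OF assms, of b c "refl_hp a b x"] by (simp add: refl_hp_involution[OF assms])

lemma polarization_scale:
  assumes "0 \<le> c"
  shows "polarization a b (\<lambda>x. c * u x) = (\<lambda>x. c * polarization a b u x)"
  using assms by (simp add: polarization_def fun_eq_iff max_mult_distrib_left min_mult_distrib_left)

definition line_ball :: "'a::real_normed_vector \<Rightarrow> real \<Rightarrow> 'a set" where
  "line_ball e k = ball (k *\<^sub>R e) (1/4)"

lemma dist_line_balls:
  assumes "norm e = 1" "x \<in> line_ball e k" "y \<in> line_ball e k'"
  shows "\<bar>k - k'\<bar> - 1/2 < dist x y" "dist x y < \<bar>k - k'\<bar> + 1/2"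
proof -
  have "dist (k *\<^sub>R e) (k' *\<^sub>R e) = \<bar>k - k'\<bar>"
    using assms(1) by (simp add: dist_norm flip: scaleR_diff_left)
  then show "\<bar>k - k'\<bar> - 1/2 < dist x y" "dist x y < \<bar>k - k'\<bar> + 1/2"
    using dist_in_balls[of x "k *\<^sub>R e" "1/4" y "k' *\<^sub>R e" "1/4"] assms
    by (simp_all add: line_ball_def dist_commute)
qed

lemma line_ball_unique:
  assumes "norm e = 1" "x \<in> line_ball e k" "1/2 \<le> \<bar>k - k'\<bar>"
  shows "x \<notin> line_ball e k'"
  using dist_line_balls(1)[OF assms(1,2), of x k'] assms(3) by force

lemma line_balls_disjoint:
  assumes "norm e = 1" "1/2 \<le> \<bar>k - k'\<bar>"
  shows "line_ball e k \<inter> line_ball e k' = {}"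
  using line_ball_unique[OF assms(1) _ assms(2)] by blast

lemma inner_line_ball:
  fixes e :: "'a::real_inner"
  assumes "norm e = 1" "x \<in> line_ball e k"
  shows "\<bar>inner e x - k\<bar> < 1/4"
proof -
  have "inner e x - k = inner e (x - k *\<^sub>R e)"
    using assms(1) by (simp add: inner_diff_right flip: power2_norm_eq_inner)
  also have "\<bar>\<dots>\<bar> \<le> norm (x - k *\<^sub>R e)"
    using Cauchy_Schwarz_ineq2[of e "x - k *\<^sub>R e"] assms(1) by simp
  finally show ?thesis
    using assms(2) by (simp add: line_ball_def dist_norm norm_minus_commute)
qed

lemma refl_hp_line_ball_iff:
  assumes "e \<noteq> 0"
  shows "refl_hp e 0 x \<in> line_ball e k \<longleftrightarrow> x \<in> line_ball e (- k)"
proof -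
  have "refl_hp e 0 (k *\<^sub>R e) = (- k) *\<^sub>R e"
    using assms by (simp add: refl_hp_def power2_norm_eq_inner algebra_simps flip: scaleR_add_left)
  then show ?thesis
    unfolding line_ball_def refl_hp_in_ball_iff[OF assms] by simp
qed

lemma sets_line_ball [measurable]: "line_ball e k \<in> sets lebesgue"
  by (simp add: line_ball_def)

lemma emeasure_line_ball:
  "emeasure lebesgue (line_ball e k :: 'a::euclidean_space set)
     = ennreal (unit_ball_vol (DIM('a)) * (1/4) ^ DIM('a))"
  by (simp add: line_ball_def emeasure_ball)

definition line_profile :: "'a::real_normed_vector \<Rightarrow> real \<Rightarrow> real \<Rightarrow> 'a \<Rightarrow> real" where
  "line_profile e s t x =
     (if x \<in> line_ball e (-3) then s else if x \<in> line_ball e 3 then t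
      else if x \<in> line_ball e (-1) then 3/5 else if x \<in> line_ball e 1 then 0 else 1)"

lemma line_profile_measurable [measurable]: "line_profile e s t \<in> borel_measurable lebesgue"
  unfolding line_profile_def by measurable

lemma polarization_line_profile:
  fixes e :: "'a::euclidean_space"
  assumes "norm e = 1"
  shows "polarization e 0 (line_profile e s t) = line_profile e (max s t) (min s t)"
proof
  fix x
  have "e \<noteq> 0" using assms by auto
  have neg: "inner e x \<le> 0" if "x \<in> line_ball e k" "k \<le> -1" for k
    using inner_line_ball[OF assms that(1)] that(2) by linarith
  have pos: "\<not> inner e x \<le> 0" if "x \<in> line_ball e k" "1 \<le> k" for k
    using inner_line_ball[OF assms that(1)] that(2) by linarith
  note excl = line_ball_unique[OF assms]
  note defs = polarization_def line_profile_def halfspace_def refl_hp_line_ball_iff[OF \<open>e \<noteq> 0\<close>]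
  consider (m3) "x \<in> line_ball e (-3)" | (p3) "x \<in> line_ball e 3" | (m1) "x \<in> line_ball e (-1)"
    | (p1) "x \<in> line_ball e 1"
    | (outside) "x \<notin> line_ball e (-3)" "x \<notin> line_ball e 3" "x \<notin> line_ball e (-1)" "x \<notin> line_ball e 1"
    by blast
  then show "polarization e 0 (line_profile e s t) x = line_profile e (max s t) (min s t) x"
  proof cases
    case m3
    then show ?thesis by (simp add: defs excl[OF m3] neg[OF m3])
  next
    case p3
    then show ?thesis by (simp add: defs excl[OF p3] pos[OF p3])
  next
    case m1
    then show ?thesis by (simp add: defs excl[OF m1] neg[OF m1])
  next
    case p1
    then show ?thesis by (simp add: defs excl[OF p1] pos[OF p1])
  next
    case outside
    then show ?thesis by (simp add: defs)
  qed
qed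

lemma line_ball_regions:
  assumes "norm e = 1"
  shows "x \<in> line_ball e (-3) \<and> x \<notin> line_ball e 3 \<and> x \<notin> line_ball e (-1) \<and> x \<notin> line_ball e 1 \<or>
    x \<notin> line_ball e (-3) \<and> x \<in> line_ball e 3 \<and> x \<notin> line_ball e (-1) \<and> x \<notin> line_ball e 1 \<or>
    x \<notin> line_ball e (-3) \<and> x \<notin> line_ball e 3 \<and> x \<in> line_ball e (-1) \<and> x \<notin> line_ball e 1 \<or>
    x \<notin> line_ball e (-3) \<and> x \<notin> line_ball e 3 \<and> x \<notin> line_ball e (-1) \<and> x \<in> line_ball e 1 \<or>
    x \<notin> line_ball e (-3) \<and> x \<notin> line_ball e 3 \<and> x \<notin> line_ball e (-1) \<and> x \<notin> line_ball e 1"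
  using line_ball_unique[OF assms, of x] by force

lemma jump_set_line_profile:
  assumes "norm e = 1" "1 < s" "s \<le> 8/5" "8/5 < t" "t \<le> 2"
  shows "jump_set 1 (line_profile e s t)
      = sym_rect (line_ball e (-3) \<union> line_ball e 3) (line_ball e 1) \<union> sym_rect (line_ball e 3) (line_ball e (-1))"
    and "jump_set 1 (line_profile e t s)
      = sym_rect (line_ball e (-3) \<union> line_ball e 3) (line_ball e 1) \<union> sym_rect (line_ball e (-3)) (line_ball e (-1))"
proof -
  note regions = line_ball_regions[OF assms(1)]
  have "(x, y) \<in> jump_set 1 (line_profile e s t) \<longleftrightarrow>
      (x, y) \<in> sym_rect (line_ball e (-3) \<union> line_ball e 3) (line_ball e 1) \<union> sym_rect (line_ball e 3) (line_ball e (-1))"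
    for x y
    using regions[of x] regions[of y]
    by (elim disjE conjE) (use assms(2-) in \<open>simp_all add: jump_set_def sym_rect_def line_profile_def\<close>)
  then show "jump_set 1 (line_profile e s t)
      = sym_rect (line_ball e (-3) \<union> line_ball e 3) (line_ball e 1) \<union> sym_rect (line_ball e 3) (line_ball e (-1))"
    by auto
  have "(x, y) \<in> jump_set 1 (line_profile e t s) \<longleftrightarrow>
      (x, y) \<in> sym_rect (line_ball e (-3) \<union> line_ball e 3) (line_ball e 1) \<union> sym_rect (line_ball e (-3)) (line_ball e (-1))"
    for x y
    using regions[of x] regions[of y]
    by (elim disjE conjE) (use assms(2-) in \<open>simp_all add: jump_set_def sym_rect_def line_profile_def\<close>)
  then show "jump_set 1 (line_profile e t s)
      = sym_rect (line_ball e (-3) \<union> line_ball e 3) (line_ball e 1) \<union> sym_rect (line_ball e (-3)) (line_ball e (-1))"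
    by auto
qed

lemma kernel_energy_line_profile_less:
  fixes e :: "'a::euclidean_space"
  assumes "norm e = 1" "0 \<le> p" "0 < \<delta>"
  shows "kernel_energy p \<delta> (jump_set 1 (line_profile e (3/2) (17/10)))
       < kernel_energy p \<delta> (jump_set 1 (line_profile e (17/10) (3/2)))"
proof -
  let ?B = "line_ball e" and ?M = "lebesgue \<Otimes>\<^sub>M lebesgue :: ('a \<times> 'a) measure"
  define C where "C = sym_rect (?B (-3) \<union> ?B 3) (?B 1)"
  define R where "R k = sym_rect (?B k) (?B (-1))" for k
  have disjoint: "?B k \<inter> ?B k' = {}" if "1/2 \<le> \<bar>k - k'\<bar>" for k k'
    using line_balls_disjoint[OF assms(1) that] .
  have jumps: "jump_set 1 (line_profile e (3/2) (17/10)) = C \<union> R 3"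
      "jump_set 1 (line_profile e (17/10) (3/2)) = C \<union> R (-3)"
    using jump_set_line_profile[OF assms(1), of "3/2" "17/10"] by (simp_all add: C_def R_def)
  have C_R_disjoint: "C \<inter> R 3 = {}" "C \<inter> R (-3) = {}"
    using disjoint[of 1 "-1"] disjoint[of 1 3] disjoint[of 1 "-3"]
    by (auto simp: C_def R_def sym_rect_def)
  have emeasure_R: "emeasure ?M (R k) = 2 * (emeasure lebesgue (?B 0) * emeasure lebesgue (?B 0))"
    if "k \<in> {3, -3}" for k
    using that disjoint[of 3 "-1"] disjoint[of "-3" "-1"]
    by (auto simp: R_def emeasure_sym_rect emeasure_line_ball)
  have "emeasure ?M C < \<infinity>"
  proof -
    have "emeasure lebesgue (?B (-3) \<union> ?B 3) \<le> emeasure lebesgue (?B (-3)) + emeasure lebesgue (?B 3)"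
      by (intro emeasure_subadditive) auto
    then have "emeasure lebesgue (?B (-3) \<union> ?B 3) < \<infinity>"
      by (auto simp: emeasure_line_ball le_less_trans)
    moreover have "emeasure ?M C = 2 * (emeasure lebesgue (?B (-3) \<union> ?B 3) * emeasure lebesgue (?B 1))"
      unfolding C_def using disjoint[of "-3" 1] disjoint[of 3 1] by (intro emeasure_sym_rect) auto
    ultimately show ?thesis
      by (simp add: emeasure_line_ball ennreal_mult_less_top)
  qed
  moreover have "1 \<le> dist x y" if "(x, y) \<in> C" for x y
    using that dist_line_balls(1)[OF assms(1), of x _ y] dist_line_balls(1)[OF assms(1), of y _ x]
    by (fastforce simp: C_def sym_rect_def dist_commute)
  ultimately have "kernel_energy p \<delta> C < \<infinity>"
    using kernel_energy_le[of C 1 p \<delta>] assms(2) by (simp add: C_def ennreal_mult_less_top le_less_trans)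
  moreover have "kernel_energy p \<delta> (R 3) < kernel_energy p \<delta> (R (-3))"
  proof (rule kernel_energy_less[where M = "5/2" and m = "7/2"])
    show "emeasure ?M (R 3) = emeasure ?M (R (-3))" "0 < emeasure ?M (R (-3))" "emeasure ?M (R (-3)) < \<infinity>"
      using emeasure_R
      by (auto simp: emeasure_line_ball unit_ball_vol_pos ennreal_zero_less_mult_iff ennreal_mult_less_top)
    show "7/2 \<le> dist x y" if "(x, y) \<in> R 3" for x y
      using that dist_line_balls(1)[OF assms(1), of x 3 y "-1"] dist_line_balls(1)[OF assms(1), of x "-1" y 3]
      by (auto simp: R_def sym_rect_def)
    show "0 < dist x y \<and> dist x y \<le> 5/2" if "(x, y) \<in> R (-3)" for x y
      using that dist_line_balls[OF assms(1), of x "-3" y "-1"] dist_line_balls[OF assms(1), of x "-1" y "-3"]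
      by (auto simp: R_def sym_rect_def)
  qed (use assms(2,3) in \<open>simp_all add: R_def\<close>)
  ultimately show ?thesis
    using C_R_disjoint by (simp add: jumps kernel_energy_Un C_def R_def ennreal_add_left_cancel_less)
qed

theorem theorem1p1:
  fixes p :: real
  assumes "p \<ge> 1"
  shows "\<exists>\<delta>0 > 0. \<exists>(a::'a::euclidean_space) b. a \<noteq> 0 \<and> 0 \<in> halfspace a b \<and>
           (\<forall>\<delta>. 0 < \<delta> \<and> \<delta> < \<delta>0 \<longrightarrow>
              (\<exists>u :: 'a \<Rightarrow> real. u \<in> borel_measurable lebesgue \<and>
                  I_delta p \<delta> (polarization a b u) > I_delta p \<delta> u))"
proof -
  obtain e :: 'a where "e \<in> Basis"
    using nonempty_Basis by blast
  then have e: "norm e = 1" "e \<noteq> 0"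
    by (auto simp: nonzero_Basis)
  have "\<exists>u. u \<in> borel_measurable lebesgue \<and> I_delta p \<delta> (polarization e 0 u) > I_delta p \<delta> u"
    if "0 < \<delta>" for \<delta>
  proof (intro exI conjI)
    let ?u = "\<lambda>x. \<delta> * line_profile e (3/2) (17/10) x"
    show "?u \<in> borel_measurable lebesgue"
      by measurable
    have "polarization e 0 ?u = (\<lambda>x. \<delta> * line_profile e (17/10) (3/2) x)"
      using polarization_line_profile[OF e(1), of "3/2" "17/10"] that
      by (simp add: polarization_scale)
    then show "I_delta p \<delta> (polarization e 0 ?u) > I_delta p \<delta> ?u"
      using kernel_energy_line_profile_less[OF e(1) _ that] assms that
      by (simp add: I_delta_scaled[OF that])
  qed
  then show ?thesis
    using e(2) by (intro exI[of _ 1] conjI exI[of _ e] exI[of _ 0]) (auto simp: halfspace_def)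
qed

end
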